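(* Let $\hat B$ be the bus susceptance matrix of a connected power network with bus set $\mathcal N$. Let $P^g, P^d \in \mathbb R^{\mathcal N}$ and let $\theta$ satisfy $\hat B\theta = P^g - P^d$. Let $s \neq t$ be two generator buses, let $\Gamma > 0$, and define $\delta$ by $\delta_s = \Gamma$, $\delta_t = -\Gamma$, $\delta_k = 0$ for $k \neq s,t$; let $\hat\theta$ satisfy $\hat B\hat\theta = P^g + \delta - P^d$. Let $k \neq t$ be a bus such that every path in the network between $s$ and $k$ includes $t$. Then $$\hat\theta_k - \hat\theta_t \;=\; \theta_k - \theta_t .$$
   Context: DC power flow model. The network is an undirected connected graph on the bus set $\mathcal N$; each line $km$ has reactance $x_{km} > 0$. The bus susceptance matrix $\hat B$ is defined by $\hat B_{kk} = \sum_{km \ni k} 1/x_{km}$ (sum over lines incident to $k$), $\hat B_{km} = -1/x_{km}$ if $km$ is a line, and $\hat B_{km} = 0$ otherwise. *)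

theory Defs
  imports Complex_Main
begin

definition network :: "'a set \<Rightarrow> ('a \<Rightarrow> 'a \<Rightarrow> bool) \<Rightarrow> ('a \<Rightarrow> 'a \<Rightarrow> real) \<Rightarrow> bool" where
  "network N E x \<longleftrightarrow> finite N \<and>
     (\<forall>k m. E k m \<longrightarrow> k \<in> N \<and> m \<in> N) \<and>
     (\<forall>k m. E k m \<longrightarrow> E m k) \<and>
     (\<forall>k. \<not> E k k) \<and>
     (\<forall>k m. E k m \<longrightarrow> x k m = x m k \<and> x k m > 0)"

definition is_walk :: "('a \<Rightarrow> 'a \<Rightarrow> bool) \<Rightarrow> 'a list \<Rightarrow> bool" where
  "is_walk E ps \<longleftrightarrow> ps \<noteq> [] \<and> (\<forall>i. Suc i < length ps \<longrightarrow> E (ps ! i) (ps ! Suc i))"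

definition is_path_between :: "('a \<Rightarrow> 'a \<Rightarrow> bool) \<Rightarrow> 'a \<Rightarrow> 'a \<Rightarrow> 'a list \<Rightarrow> bool" where
  "is_path_between E u v ps \<longleftrightarrow> is_walk E ps \<and> distinct ps \<and> hd ps = u \<and> last ps = v"

definition connected_network :: "'a set \<Rightarrow> ('a \<Rightarrow> 'a \<Rightarrow> bool) \<Rightarrow> bool" where
  "connected_network N E \<longleftrightarrow> (\<forall>u\<in>N. \<forall>v\<in>N. \<exists>ps. is_path_between E u v ps)"

definition Bhat :: "'a set \<Rightarrow> ('a \<Rightarrow> 'a \<Rightarrow> bool) \<Rightarrow> ('a \<Rightarrow> 'a \<Rightarrow> real) \<Rightarrow> 'a \<Rightarrow> 'a \<Rightarrow> real" where
  "Bhat N E x k m =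
     (if k = m then (\<Sum>j\<in>{j\<in>N. E k j}. 1 / x k j)
      else if E k m then - (1 / x k m) else 0)"

definition mat_vec :: "'a set \<Rightarrow> ('a \<Rightarrow> 'a \<Rightarrow> real) \<Rightarrow> ('a \<Rightarrow> real) \<Rightarrow> 'a \<Rightarrow> real" where
  "mat_vec N A v k = (\<Sum>m\<in>N. A k m * v m)"

end

theory Submission
  imports Defs
begin

text \<open>The difference \<open>\<phi> = \<theta>h - \<theta>\<close> of the two angle vectors satisfies \<open>B\<phi> = 0\<close> at every
  bus other than \<open>s\<close> and \<open>t\<close>. The buses that \<open>t\<close> separates from \<open>s\<close> form a region
  whose only neighbour outside it is \<open>t\<close>, and \<open>s\<close> lies outside it. By the discrete maximum
  principle a function with \<open>B\<phi> = 0\<close> on such a region attains its maximum and its minimum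
  over the region at \<open>t\<close>, so \<open>\<phi>\<close> is constant there: \<open>\<phi> k = \<phi> t\<close>.\<close>

lemma mat_vec_Bhat:
  assumes net: "network N E x" and iN: "i \<in> N"
  shows "mat_vec N (Bhat N E x) f i = (\<Sum>j\<in>{j\<in>N. E i j}. (f i - f j) / x i j)"
proof -
  have irr: "\<not> E i i" and fin: "finite N" using net unfolding network_def by auto
  have "mat_vec N (Bhat N E x) f i =
      (\<Sum>m\<in>N. (if m = i then (\<Sum>j\<in>{j\<in>N. E i j}. 1 / x i j) * f i else 0)
             + (if E i m then - (f m / x i m) else 0))"
    unfolding mat_vec_def Bhat_def by (rule sum.cong) (auto simp: irr)
  also have "\<dots> = (\<Sum>j\<in>{j\<in>N. E i j}. 1 / x i j) * f i + (\<Sum>j\<in>{j\<in>N. E i j}. - (f j / x i j))"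
    by (simp add: sum.distrib sum.inter_filter fin iN)
  also have "\<dots> = (\<Sum>j\<in>{j\<in>N. E i j}. (f i - f j) / x i j)"
    by (simp add: sum_distrib_right sum.distrib[symmetric] diff_divide_distrib)
  finally show ?thesis .
qed

lemma mat_vec_diff: "mat_vec N A (\<lambda>v. f v - g v) i = mat_vec N A f i - mat_vec N A g i"
  unfolding mat_vec_def by (simp add: right_diff_distrib sum_subtractf)

lemma mat_vec_uminus: "mat_vec N A (\<lambda>v. - f v) i = - mat_vec N A f i"
  unfolding mat_vec_def by (simp add: sum_negf)

lemma Bhat_local_max_neighbour_eq:
  assumes net: "network N E x" and vN: "v \<in> N"
    and harm: "mat_vec N (Bhat N E x) f v = 0"
    and le: "\<And>j. E v j \<Longrightarrow> f j \<le> f v"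
    and Evw: "E v w"
  shows "f w = f v"
proof -
  have fin: "finite {j\<in>N. E v j}" using net unfolding network_def by auto
  have pos: "\<And>j. E v j \<Longrightarrow> x v j > 0" and wN: "w \<in> N"
    using net Evw unfolding network_def by auto
  have "\<forall>j\<in>{j\<in>N. E v j}. 0 \<le> (f v - f j) / x v j"
    using le pos by (simp add: less_imp_le)
  moreover have "(\<Sum>j\<in>{j\<in>N. E v j}. (f v - f j) / x v j) = 0"
    using harm mat_vec_Bhat[OF net vN] by simp
  ultimately have "\<forall>j\<in>{j\<in>N. E v j}. (f v - f j) / x v j = 0"
    using sum_nonneg_eq_0_iff[OF fin, of "\<lambda>j. (f v - f j) / x v j"] by blast
  then have "(f v - f w) / x v w = 0" using wN Evw by blast
  then show ?thesis using pos[OF Evw] by simp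
qed

lemma is_walk_take:
  assumes "is_walk E ps" "0 < m"
  shows "is_walk E (take m ps)"
  using assms unfolding is_walk_def by auto

lemma is_walk_set_subset:
  assumes walk: "is_walk E ps" and hd: "hd ps \<in> S"
    and closed: "\<And>v w. v \<in> S \<Longrightarrow> E v w \<Longrightarrow> w \<in> S"
  shows "set ps \<subseteq> S"
proof -
  have ne: "ps \<noteq> []" using walk unfolding is_walk_def by simp
  have "ps ! n \<in> S" if "n < length ps" for n
    using that
  proof (induction n)
    case 0
    then show ?case using hd ne by (simp add: hd_conv_nth)
  next
    case (Suc n)
    then show ?case using closed walk unfolding is_walk_def by simp
  qed
  then show ?thesis by (auto simp: in_set_conv_nth)
qed

lemma is_path_between_take:
  assumes path: "is_path_between E u w ps" and n: "n < length ps"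
  shows "is_path_between E u (ps ! n) (take (Suc n) ps)"
proof -
  have "last (take (Suc n) ps) = ps ! n" using n by (simp add: take_Suc_conv_app_nth)
  then show ?thesis
    using path is_walk_take[of E ps "Suc n"] unfolding is_path_between_def by simp
qed

lemma is_path_between_snoc:
  assumes path: "is_path_between E u w ps" and Ewv: "E w v" and v: "v \<notin> set ps"
  shows "is_path_between E u v (ps @ [v])"
proof -
  have ne: "ps \<noteq> []" and lst: "ps ! (length ps - 1) = w"
    using path unfolding is_path_between_def is_walk_def by (auto simp: last_conv_nth)
  have "E ((ps @ [v]) ! i) ((ps @ [v]) ! Suc i)" if i: "Suc i < length (ps @ [v])" for i
  proof (cases "Suc i < length ps")
    case True
    then show ?thesis using path unfolding is_path_between_def is_walk_def by (simp add: nth_append)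
  next
    case False
    then have "i = length ps - 1" "Suc i = length ps" using i by auto
    then show ?thesis using lst Ewv by (simp add: nth_append)
  qed
  then show ?thesis using path v ne unfolding is_path_between_def is_walk_def by simp
qed

lemma is_path_between_extend:
  assumes path: "is_path_between E u w ps" and Ewv: "E w v"
  obtains qs where "is_path_between E u v qs" and "set qs \<subseteq> insert v (set ps)"
proof (cases "v \<in> set ps")
  case True
  then obtain n where n: "n < length ps" "v = ps ! n" by (metis in_set_conv_nth)
  then show ?thesis using that is_path_between_take[OF path] by (meson in_set_takeD insertI2 subsetI)
next
  case False
  then show ?thesis using that is_path_between_snoc[OF path Ewv] by auto
qed

definition separates :: "('a \<Rightarrow> 'a \<Rightarrow> bool) \<Rightarrow> 'a \<Rightarrow> 'a \<Rightarrow> 'a \<Rightarrow> bool" where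
  "separates E t s v \<longleftrightarrow> (\<forall>ps. is_path_between E s v ps \<longrightarrow> t \<in> set ps)"

lemma separates_self: "separates E t s s \<Longrightarrow> t = s"
proof -
  have "is_path_between E s s [s]" unfolding is_path_between_def is_walk_def by simp
  then show "separates E t s s \<Longrightarrow> t = s" unfolding separates_def by fastforce
qed

lemma separates_neighbour:
  assumes E_sym: "\<And>a b. E a b \<Longrightarrow> E b a"
    and sep: "separates E t s v" and vt: "v \<noteq> t" and Evw: "E v w"
  shows "separates E t s w"
  unfolding separates_def
proof (intro allI impI)
  fix ps assume ps: "is_path_between E s w ps"
  obtain qs where qs: "is_path_between E s v qs" and "set qs \<subseteq> insert v (set ps)"
    using is_path_between_extend[OF ps E_sym[OF Evw]] .
  moreover have "t \<in> set qs" using sep qs unfolding separates_def by blast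
  ultimately show "t \<in> set ps" using vt by auto
qed

lemma Bhat_maximum_principle:
  assumes net: "network N E x" and conn: "connected_network N E"
    and CN: "C \<subseteq> N" and tN: "t \<in> N" and tC: "t \<notin> C"
    and closed: "\<And>v w. v \<in> C \<Longrightarrow> E v w \<Longrightarrow> w \<in> C \<or> w = t"
    and harm: "\<And>i. i \<in> C \<Longrightarrow> mat_vec N (Bhat N E x) f i = 0"
    and kC: "k \<in> C"
  shows "f k \<le> f t"
proof (rule ccontr)
  assume "\<not> f k \<le> f t"
  have fin: "finite C" using net CN finite_subset unfolding network_def by blast
  define M where "M = Max (f ` C)"
  have le_M: "\<And>v. v \<in> C \<Longrightarrow> f v \<le> M" using fin M_def by simp
  have t_less: "f t < M" using le_M[OF kC] \<open>\<not> f k \<le> f t\<close> by linarith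
  have "M \<in> f ` C" unfolding M_def using fin kC by (intro Max_in) auto
  then obtain i where iC: "i \<in> C" and fi: "f i = M" by blast
  define S where "S = {v\<in>C. f v = M}"
  have S_closed: "w \<in> S" if "v \<in> S" and Evw: "E v w" for v w
  proof -
    have vC: "v \<in> C" and fv: "f v = M" using that S_def by auto
    have "f j \<le> f v" if "E v j" for j using closed[OF vC that] le_M t_less fv by force
    then have "f w = M"
      using Bhat_local_max_neighbour_eq[OF net _ harm[OF vC] _ Evw] vC CN fv by auto
    then show "w \<in> S" using closed[OF vC Evw] t_less S_def by auto
  qed
  obtain ps where "is_path_between E i t ps"
    using conn iC CN tN unfolding connected_network_def by blast
  then have walk: "is_walk E ps" and "hd ps \<in> S" and t_last: "last ps = t"
    using iC fi unfolding is_path_between_def S_def by auto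
  then have "set ps \<subseteq> S" using is_walk_set_subset S_closed by metis
  moreover have "t \<in> set ps" using walk t_last unfolding is_walk_def by auto
  ultimately show False using tC S_def by auto
qed

lemma Bhat_harmonic_eq_boundary:
  assumes net: "network N E x" and conn: "connected_network N E"
    and CN: "C \<subseteq> N" and tN: "t \<in> N" and tC: "t \<notin> C"
    and closed: "\<And>v w. v \<in> C \<Longrightarrow> E v w \<Longrightarrow> w \<in> C \<or> w = t"
    and harm: "\<And>i. i \<in> C \<Longrightarrow> mat_vec N (Bhat N E x) f i = 0"
    and kC: "k \<in> C"
  shows "f k = f t"
proof -
  have "f k \<le> f t"
    using Bhat_maximum_principle[OF net conn CN tN tC closed harm kC] .
  moreover have "- f k \<le> - f t"
    using Bhat_maximum_principle[OF net conn CN tN tC closed _ kC, where f = "\<lambda>v. - f v"]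
    by (simp add: mat_vec_uminus harm)
  ultimately show ?thesis by simp
qed

theorem lemma3:
  fixes N :: "'a set" and E :: "'a \<Rightarrow> 'a \<Rightarrow> bool" and x :: "'a \<Rightarrow> 'a \<Rightarrow> real"
    and Pg Pd \<theta> \<theta>h :: "'a \<Rightarrow> real" and s t k :: 'a and \<Gamma> :: real
  assumes net: "network N E x"
    and conn: "connected_network N E"
    and theta: "\<forall>i\<in>N. mat_vec N (Bhat N E x) \<theta> i = Pg i - Pd i"
    and st: "s \<in> N" "t \<in> N" "s \<noteq> t"
    and Gamma: "\<Gamma> > 0"
    and thetah: "\<forall>i\<in>N. mat_vec N (Bhat N E x) \<theta>h i =
                   Pg i + (if i = s then \<Gamma> else if i = t then - \<Gamma> else 0) - Pd i"
    and k: "k \<in> N" "k \<noteq> t"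
    and cut: "\<forall>ps. is_path_between E s k ps \<longrightarrow> t \<in> set ps"
  shows "\<theta>h k - \<theta>h t = \<theta> k - \<theta> t"
proof -
  define C where "C = {v\<in>N. v \<noteq> t \<and> separates E t s v}"
  have E_sym: "\<And>a b. E a b \<Longrightarrow> E b a" and adj_N: "\<And>a b. E a b \<Longrightarrow> b \<in> N"
    using net unfolding network_def by blast+
  have s_notin_C: "s \<notin> C" using separates_self[of E t s] st(3) unfolding C_def by auto
  have closed: "w \<in> C \<or> w = t" if vC: "v \<in> C" and Evw: "E v w" for v w
  proof (cases "w = t")
    case False
    have "separates E t s v" and "v \<noteq> t" using vC unfolding C_def by auto
    then have "separates E t s w"
      using separates_neighbour[of E t s v w] E_sym Evw False by blast
    then show ?thesis using adj_N[OF Evw] False unfolding C_def by blast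
  qed simp
  \<comment> \<open>The injections differ only at \<open>s\<close> and \<open>t\<close>.\<close>
  have harm: "mat_vec N (Bhat N E x) (\<lambda>v. \<theta>h v - \<theta> v) i = 0" if "i \<in> C" for i
    using that s_notin_C theta thetah by (auto simp: mat_vec_diff C_def)
  have "\<theta>h k - \<theta> k = \<theta>h t - \<theta> t"
    by (rule Bhat_harmonic_eq_boundary[OF net conn _ st(2) _ closed harm])
       (use k cut in \<open>auto simp: C_def separates_def\<close>)
  then show ?thesis by simp
qed

end
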